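(* Let $\rho\in\mathbb R$ and let $\mathbf b=\{b_n\}_{n\ge1}$ be an admissible sequence of real numbers. For every $\beta\in\mathbb R$ assume that the Dirichlet series $f_\beta(s)=\sum_{n\in\mathrm{supp}(\mathbf b)}n^{i\beta}b_nn^{-s}$ converges on $\mathbb H_\rho$. Then the family $\{f_\beta:\beta\in\mathbb R\}$ is linearly independent in the space $\mathrm{Hol}(\mathbb H_\rho)$ of holomorphic functions on $\mathbb H_\rho$.
   Context: $\mathbb H_\rho=\{\Re s>\rho\}$. A sequence $\mathbf b$ of real numbers is admissible if its support $\mathrm{supp}(\mathbf b)=\{n\in\mathbb N:b_n\ne0\}$ is an infinite subset of $\mathbb N$ closed under multiplication and there exist $p,q\in\mathrm{supp}(\mathbf b)\setminus\{1\}$ with $\gcd(p,q)=1$. *)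

theory Defs
  imports "HOL-Complex_Analysis.Complex_Analysis"
begin

text \<open>Support of a sequence indexed by the positive integers (index 0 is ignored).\<close>
definition supp_seq :: "(nat \<Rightarrow> real) \<Rightarrow> nat set" where
  "supp_seq b = {n. n \<ge> 1 \<and> b n \<noteq> 0}"

definition admissible :: "(nat \<Rightarrow> real) \<Rightarrow> bool" where
  "admissible b \<longleftrightarrow>
     infinite (supp_seq b) \<and>
     (\<forall>m\<in>supp_seq b. \<forall>n\<in>supp_seq b. m * n \<in> supp_seq b) \<and>
     (\<exists>p\<in>supp_seq b - {1}. \<exists>q\<in>supp_seq b - {1}. coprime p q)"

definition half_plane :: "real \<Rightarrow> complex set" where
  "half_plane \<rho> = {s. Re s > \<rho>}"

definition tw_term :: "(nat \<Rightarrow> real) \<Rightarrow> real \<Rightarrow> complex \<Rightarrow> nat \<Rightarrow> complex" where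
  "tw_term b \<beta> s n =
     (if n \<in> supp_seq b
      then of_nat n powr (\<i> * of_real \<beta>) * of_real (b n) * of_nat n powr (- s)
      else 0)"

definition tw_series :: "(nat \<Rightarrow> real) \<Rightarrow> real \<Rightarrow> complex \<Rightarrow> complex" where
  "tw_series b \<beta> s = (\<Sum>n. tw_term b \<beta> s n)"

end

theory Submission
  imports Defs
begin

text \<open>Each \<open>f_\<beta>\<close> is a Dirichlet series converging on \<open>H_\<rho>\<close>, hence holomorphic there
  (by Abel summation the series converges locally uniformly). If \<open>\<Sum>\<beta>\<in>B. c_\<beta> f_\<beta>\<close> vanishes on
  \<open>H_\<rho>\<close>, it is the Dirichlet series with coefficients \<open>b_n \<Sum>\<beta>\<in>B. c_\<beta> n^(i\<beta>)\<close>, so by uniqueness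
  of Dirichlet coefficients \<open>\<Sum>\<beta>\<in>B. c_\<beta> n^(i\<beta>) = 0\<close> for every \<open>n\<close> in the support. On the
  multiplicatively closed support the maps \<open>n \<mapsto> n^(i\<beta>)\<close> are multiplicative and pairwise
  distinct, since \<open>p^(i\<theta>) = q^(i\<theta>) = 1\<close> for coprime \<open>p, q > 1\<close> would make \<open>log p / log q\<close>
  rational. Dedekind's argument for distinct characters then forces all \<open>c_\<beta>\<close> to vanish.\<close>

lemma summation_by_parts:
  fixes u g :: "nat \<Rightarrow> 'a::comm_ring_1"
  shows "(\<Sum>n<Suc N. u n * g n) =
    (\<Sum>k\<le>N. u k) * g (Suc N) + (\<Sum>n<Suc N. (\<Sum>k\<le>n. u k) * (g n - g (Suc n)))"
  by (induction N) (simp_all add: algebra_simps)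

lemma sums_summation_by_parts:
  fixes u g :: "nat \<Rightarrow> 'a::{comm_ring_1, topological_monoid_add}"
  assumes "(\<lambda>n. (\<Sum>k\<le>n. u k) * (g n - g (Suc n))) sums S"
    and "(\<lambda>n. (\<Sum>k\<le>n. u k) * g (Suc n)) \<longlonglongrightarrow> 0"
  shows "(\<lambda>n. u n * g n) sums S"
proof -
  have "(\<lambda>N. \<Sum>n<Suc N. (\<Sum>k\<le>n. u k) * (g n - g (Suc n))) \<longlonglongrightarrow> S"
    using assms(1) unfolding sums_def by (rule LIMSEQ_Suc)
  with assms(2) have "(\<lambda>N. \<Sum>n<Suc N. u n * g n) \<longlonglongrightarrow> 0 + S"
    unfolding summation_by_parts[of u g] by (rule tendsto_add)
  then have "(\<lambda>N. \<Sum>n<Suc N. u n * g n) \<longlonglongrightarrow> S"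
    by (simp only: add_0_left)
  then show ?thesis
    unfolding sums_def by (rule LIMSEQ_imp_Suc)
qed

lemma norm_of_nat_powr: "norm (of_nat n powr (w :: complex)) = real n powr Re w"
  by (subst norm_powr_real_powr) auto

lemma norm_nat_powr_diff_le:
  fixes w :: complex
  assumes "n \<ge> 1" "Re w > 0"
  shows "norm (of_nat n powr (- w) - of_nat (Suc n) powr (- w)) \<le> norm w * real n powr (- Re w - 1)"
proof -
  define S where "S = closed_segment (of_nat n :: complex) (of_nat (Suc n))"
  have S_real: "\<exists>t. z = of_real t \<and> t \<ge> real n" if "z \<in> S" for z
  proof -
    from that obtain v where v: "0 \<le> v" "v \<le> 1" "z = (1 - v) *\<^sub>R of_nat n + v *\<^sub>R of_nat (Suc n)"
      unfolding S_def closed_segment_def by auto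
    then have "z = of_real (real n + v)"
      by (simp add: scaleR_conv_of_real algebra_simps)
    then show ?thesis
      using v by (intro exI[of _ "real n + v"]) auto
  qed
  have "norm (of_nat n powr (- w) - of_nat (Suc n) powr (- w))
      \<le> norm w * real n powr (- Re w - 1) * norm (of_nat n - of_nat (Suc n) :: complex)"
  proof (rule field_differentiable_bound[where f = "\<lambda>z. z powr (- w)" and f' = "\<lambda>z. - w * z powr (- w - 1)"])
    show "convex S" "of_nat n \<in> S" "of_nat (Suc n) \<in> S"
      unfolding S_def by auto
  next
    fix z assume "z \<in> S"
    then obtain t where t: "z = of_real t" "t \<ge> real n"
      using S_real by blast
    with assms have "t > 0" by simp
    then have "z \<notin> \<real>\<^sub>\<le>\<^sub>0"
      using t by (auto simp: complex_nonpos_Reals_iff)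
    then show "((\<lambda>z. z powr (- w)) has_field_derivative - w * z powr (- w - 1)) (at z within S)"
      by (rule has_field_derivative_at_within[OF has_field_derivative_powr])
    have "norm (- w * z powr (- w - 1)) = norm w * t powr (- Re w - 1)"
      using t \<open>t > 0\<close> by (simp add: norm_mult norm_powr_real_powr)
    also have "\<dots> \<le> norm w * real n powr (- Re w - 1)"
      using t assms by (intro mult_left_mono powr_mono2') auto
    finally show "norm (- w * z powr (- w - 1)) \<le> norm w * real n powr (- Re w - 1)" .
  qed
  then show ?thesis
    by simp
qed

lemma holomorphic_on_suminf_local_bound:
  fixes f :: "nat \<Rightarrow> complex \<Rightarrow> complex"
  assumes "open S" and "\<And>n. f n holomorphic_on S"
    and "\<And>x. x \<in> S \<Longrightarrow> \<exists>d h. 0 < d \<and> summable h \<and> (\<forall>\<^sub>F n in sequentially. \<forall>y\<in>ball x d \<inter> S. norm (f n y) \<le> h n)"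
  shows "(\<lambda>x. \<Sum>n. f n x) holomorphic_on S"
proof -
  have "\<And>n x. x \<in> S \<Longrightarrow> (f n has_field_derivative deriv (f n) x) (at x)"
    by (rule holomorphic_derivI[OF assms(2,1)])
  from series_and_derivative_comparison_local[OF assms(1) this assms(3)]
  obtain g g' where g: "\<And>x. x \<in> S \<Longrightarrow> (\<lambda>n. f n x) sums g x \<and> (g has_field_derivative g' x) (at x)"
    by blast
  then have "g holomorphic_on S"
    using assms(1) by (auto simp: holomorphic_on_open)
  moreover have "g x = (\<Sum>n. f n x)" if "x \<in> S" for x
    using sums_unique[OF conjunct1[OF g[OF that]]] .
  ultimately show ?thesis
    by (rule holomorphic_transform)
qed

lemma norm_nat_powr_diff_le_ball:
  fixes x y :: complex
  assumes "Re x > 0" and "y \<in> ball x (Re x / 2)" and "n \<ge> 1"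
  shows "norm (of_nat n powr (- y) - of_nat (Suc n) powr (- y))
    \<le> (norm x + Re x / 2) * real n powr (- (Re x / 2) - 1)"
proof -
  have "norm (x - y) < Re x / 2"
    using assms(2) by (simp add: dist_norm)
  moreover have "Re x - Re y \<le> norm (x - y)"
    using complex_Re_le_cmod[of "x - y"] by simp
  ultimately have "Re y \<ge> Re x / 2" "norm y \<le> norm x + Re x / 2"
    using norm_triangle_sub[of y x] by (auto simp: norm_minus_commute)
  have "norm (of_nat n powr (- y) - of_nat (Suc n) powr (- y)) \<le> norm y * real n powr (- Re y - 1)"
    using assms \<open>Re y \<ge> Re x / 2\<close> by (intro norm_nat_powr_diff_le) auto
  also have "\<dots> \<le> (norm x + Re x / 2) * real n powr (- (Re x / 2) - 1)"
    using assms \<open>Re y \<ge> Re x / 2\<close> \<open>norm y \<le> norm x + Re x / 2\<close>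
    by (intro mult_mono powr_mono) auto
  finally show ?thesis .
qed

lemma eventually_norm_by_parts_term_le:
  fixes U :: "nat \<Rightarrow> complex"
  assumes M: "\<And>n. norm (U n) \<le> M" and "Re x > 0"
  shows "\<forall>\<^sub>F n in sequentially. \<forall>y\<in>ball x (Re x / 2).
    norm (U n * (of_nat n powr (- y) - of_nat (Suc n) powr (- y)))
      \<le> M * ((norm x + Re x / 2) * real n powr (- (Re x / 2) - 1))"
  using eventually_ge_at_top[of 1]
proof eventually_elim
  case (elim n)
  show ?case
  proof
    fix y assume "y \<in> ball x (Re x / 2)"
    from norm_nat_powr_diff_le_ball[OF assms(2) this elim]
    show "norm (U n * (of_nat n powr (- y) - of_nat (Suc n) powr (- y)))
        \<le> M * ((norm x + Re x / 2) * real n powr (- (Re x / 2) - 1))"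
      unfolding norm_mult by (rule mult_mono[OF M _ order.trans[OF norm_ge_zero M] norm_ge_zero])
  qed
qed

lemma bounded_times_nat_powr_tendsto_0:
  fixes U :: "nat \<Rightarrow> complex"
  assumes M: "\<And>n. norm (U n) \<le> M" and "Re w > 0"
  shows "(\<lambda>n. U n * of_nat (Suc n) powr (- w)) \<longlonglongrightarrow> 0"
proof -
  have "\<forall>\<^sub>F n in sequentially. norm (U n * of_nat (Suc n) powr (- w)) \<le> M * real (Suc n) powr (- Re w)"
    by (intro always_eventually allI, unfold norm_mult norm_of_nat_powr uminus_complex.sel)
      (rule mult_right_mono[OF M powr_ge_zero])
  moreover have "(\<lambda>n. real (Suc n) powr (- Re w)) \<longlonglongrightarrow> 0"
    using \<open>Re w > 0\<close>
    by (intro tendsto_neg_powr filterlim_compose[OF filterlim_real_sequentially filterlim_Suc]) simp_all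
  then have "(\<lambda>n. M * real (Suc n) powr (- Re w)) \<longlonglongrightarrow> 0"
    by (rule tendsto_mult_right_zero)
  ultimately show ?thesis
    by (rule Lim_null_comparison)
qed

lemma holomorphic_dirichlet_series_Re_gt_0:
  fixes u :: "nat \<Rightarrow> complex"
  assumes "summable u"
  shows "(\<lambda>w. \<Sum>n. u n * of_nat n powr (- w)) holomorphic_on {w. Re w > 0}"
proof -
  define S where "S = {w :: complex. Re w > 0}"
  define U where "U n = (\<Sum>k\<le>n. u k)" for n
  \<comment> \<open>Abel summation turns the series into \<open>\<Sum>n. F n w\<close>, whose terms are \<open>O(n powr (- Re w - 1))\<close>.\<close>
  define F where "F n w = U n * (of_nat n powr (- w) - of_nat (Suc n) powr (- w))" for n w
  have "convergent U"
    unfolding U_def using summable_LIMSEQ'[OF assms] by (rule convergentI)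
  then obtain M where M: "\<And>n. norm (U n) \<le> M"
    by (metis BseqE convergent_imp_Bseq)
  define h where "h x n = M * ((norm x + Re x / 2) * real n powr (- (Re x / 2) - 1))" for x n
  have F_bound: "\<forall>\<^sub>F n in sequentially. \<forall>y\<in>ball x (Re x / 2). norm (F n y) \<le> h x n"
    if "x \<in> S" for x
    unfolding F_def h_def using that by (intro eventually_norm_by_parts_term_le[OF M]) (simp add: S_def)
  have h_summable: "summable (h x)" if "x \<in> S" for x
    using that unfolding h_def by (intro summable_mult) (simp add: S_def summable_real_powr_iff)
  have F_holomorphic: "(\<lambda>w. \<Sum>n. F n w) holomorphic_on S"
  proof (rule holomorphic_on_suminf_local_bound)
    show "open S"
      unfolding S_def by (rule open_halfspace_Re_gt)
    show "F n holomorphic_on S" for n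
      unfolding F_def by (intro holomorphic_intros)
    show "\<exists>d h. 0 < d \<and> summable h \<and> (\<forall>\<^sub>F n in sequentially. \<forall>y\<in>ball x d \<inter> S. norm (F n y) \<le> h n)"
      if "x \<in> S" for x
      using that F_bound[OF that] h_summable[OF that]
      by (intro exI[of _ "Re x / 2"] exI[of _ "h x"] conjI) (auto simp: S_def elim!: eventually_mono)
  qed
  have by_parts: "(\<lambda>n. u n * of_nat n powr (- w)) sums (\<Sum>n. F n w)" if "w \<in> S" for w
  proof (rule sums_summation_by_parts)
    have "\<forall>\<^sub>F n in sequentially. norm (F n w) \<le> h w n"
      using F_bound[OF that] by eventually_elim (use that in \<open>simp add: S_def\<close>)
    then have "summable (\<lambda>n. F n w)"
      using h_summable[OF that] by (rule summable_comparison_test_ev)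
    then show "(\<lambda>n. (\<Sum>k\<le>n. u k) * (of_nat n powr (- w) - of_nat (Suc n) powr (- w))) sums (\<Sum>n. F n w)"
      unfolding F_def U_def by (rule summable_sums)
    show "(\<lambda>n. (\<Sum>k\<le>n. u k) * of_nat (Suc n) powr (- w)) \<longlonglongrightarrow> 0"
      using bounded_times_nat_powr_tendsto_0[OF M] that unfolding U_def S_def by simp
  qed
  show ?thesis
    unfolding S_def[symmetric] by (rule holomorphic_transform[OF F_holomorphic sums_unique[OF by_parts]])
qed

lemma holomorphic_dirichlet_series:
  fixes a :: "nat \<Rightarrow> complex"
  assumes "summable (\<lambda>n. a n * of_nat n powr (- s0))"
  shows "(\<lambda>s. \<Sum>n. a n * of_nat n powr (- s)) holomorphic_on {s. Re s > Re s0}"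
proof -
  define G where "G w = (\<Sum>n. a n * of_nat n powr (- s0) * of_nat n powr (- w))" for w
  have "G holomorphic_on {w. Re w > 0}"
    unfolding G_def by (rule holomorphic_dirichlet_series_Re_gt_0[OF assms])
  then have "(G \<circ> (\<lambda>s. s - s0)) holomorphic_on {s. Re s > Re s0}"
    by (rule holomorphic_on_compose_gen[rotated]) (auto intro: holomorphic_intros)
  moreover have "G (s - s0) = (\<Sum>n. a n * of_nat n powr (- s))" for s
    unfolding G_def by (simp add: mult.assoc powr_add[symmetric])
  ultimately show ?thesis
    by (simp add: o_def)
qed

lemma tendsto_suminf_ratio_powers:
  fixes v :: "nat \<Rightarrow> 'a::{real_normed_field, banach}"
  assumes M: "\<And>k. norm (v k) \<le> M" and "n0 \<ge> 1" and below: "\<And>k. k < n0 \<Longrightarrow> v k = 0"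
  shows "(\<lambda>j. \<Sum>k. v k * of_real ((real n0 / real k) ^ j)) \<longlonglongrightarrow> v n0"
proof -
  define t where "t k j = v k * of_real ((real n0 / real k) ^ j)" for k j
  have "0 \<le> M"
    using order.trans[OF norm_ge_zero M] .
  have t_lim: "(\<lambda>j. t k j) \<longlonglongrightarrow> (if k = n0 then v n0 else 0)" for k
  proof (cases k n0 rule: linorder_cases)
    case less
    then show ?thesis by (simp add: t_def below)
  next
    case equal
    then show ?thesis using \<open>n0 \<ge> 1\<close> by (simp add: t_def)
  next
    case greater
    then have "(\<lambda>j. (real n0 / real k) ^ j) \<longlonglongrightarrow> 0"
      by (intro LIMSEQ_power_zero) simp
    from tendsto_of_real[OF this] have "(\<lambda>j. of_real ((real n0 / real k) ^ j) :: 'a) \<longlonglongrightarrow> 0"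
      by (simp only: of_real_0)
    then show ?thesis
      using greater unfolding t_def by (simp add: tendsto_mult_right_zero)
  qed
  have t_bound: "\<forall>\<^sub>F (k, j) in sequentially \<times>\<^sub>F sequentially. norm (t k j) \<le> M * (real n0 ^ 2 / real k ^ 2)"
    unfolding eventually_prod_sequentially prod.case
  proof (intro exI[of _ "max n0 2"] allI impI)
    fix j k assume "j \<ge> max n0 2" "k \<ge> max n0 2"
    then have "(real n0 / real k) ^ j \<le> real n0 ^ 2 / real k ^ 2"
      unfolding power_divide[symmetric] by (intro power_decreasing) auto
    then have "norm (v k) * (real n0 / real k) ^ j \<le> M * (real n0 ^ 2 / real k ^ 2)"
      by (rule mult_mono[OF M _ \<open>0 \<le> M\<close>]) simp
    then show "norm (t k j) \<le> M * (real n0 ^ 2 / real k ^ 2)"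
      by (simp add: t_def norm_mult del: of_real_divide of_real_power)
  qed
  have "summable (\<lambda>k. M * (real n0 ^ 2 * inverse (real k ^ 2)))"
    by (intro summable_mult inverse_power_summable) simp
  then have bound_summable: "summable (\<lambda>k. M * (real n0 ^ 2 / real k ^ 2))"
    by (simp add: divide_inverse)
  have "(\<lambda>j. \<Sum>k. t k j) \<longlonglongrightarrow> (\<Sum>k. if k = n0 then v n0 else 0)"
    using tannerys_theorem[OF t_lim t_bound bound_summable trivial_limit_sequentially] by (elim conjE)
  moreover have "(\<Sum>k. if k = n0 then v n0 else 0) = v n0"
    by (rule sums_unique[OF sums_single, symmetric])
  ultimately show ?thesis
    by (simp only: t_def)
qed

lemma dirichlet_series_lowest_coeff_eq_0:
  fixes a :: "nat \<Rightarrow> complex"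
  assumes sums0: "\<And>\<sigma>. \<sigma> > \<sigma>0 \<Longrightarrow> (\<lambda>n. a n * of_real (real n powr (- \<sigma>))) sums 0"
    and "n0 \<ge> 1" and below: "\<And>n. 1 \<le> n \<Longrightarrow> n < n0 \<Longrightarrow> a n = 0"
  shows "a n0 = 0"
proof -
  define \<sigma>1 where "\<sigma>1 = \<sigma>0 + 1"
  define v where "v n = a n * of_real (real n powr (- \<sigma>1))" for n
  have "summable v"
    using sums0[of \<sigma>1] unfolding v_def[abs_def] \<sigma>1_def by (simp add: sums_iff)
  then have "v \<longlonglongrightarrow> 0"
    by (rule summable_LIMSEQ_zero)
  then obtain M where "\<And>n. norm (v n) \<le> M"
    by (metis BseqE convergentI convergent_imp_Bseq)
  moreover have "v k = 0" if "k < n0" for k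
    using below[of k] that by (cases "k = 0") (auto simp: v_def)
  ultimately have "(\<lambda>j. \<Sum>k. v k * of_real ((real n0 / real k) ^ j)) \<longlonglongrightarrow> v n0"
    by (rule tendsto_suminf_ratio_powers[OF _ \<open>n0 \<ge> 1\<close>])
  \<comment> \<open>This sum is \<open>n0 ^ j\<close> times the series at \<open>\<sigma>1 + j\<close>.\<close>
  moreover have "(\<Sum>k. v k * of_real ((real n0 / real k) ^ j)) = 0" for j
  proof -
    have "real k powr (- (\<sigma>1 + real j)) = real k powr (- \<sigma>1) / real k ^ j" for k
      by (cases "k = 0") (simp_all add: powr_diff powr_realpow)
    then have "v k * of_real ((real n0 / real k) ^ j)
        = of_real (real n0 ^ j) * (a k * of_real (real k powr (- (\<sigma>1 + real j))))" for k
      by (simp add: v_def power_divide)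
    moreover have "(\<lambda>k. a k * of_real (real k powr (- (\<sigma>1 + real j)))) sums 0"
      by (rule sums0) (simp add: \<sigma>1_def)
    ultimately show ?thesis
      using sums_mult[of _ 0 "of_real (real n0 ^ j)"] sums_unique by fastforce
  qed
  ultimately have "v n0 = 0"
    by (simp add: LIMSEQ_const_iff)
  then show ?thesis
    using \<open>n0 \<ge> 1\<close> by (simp add: v_def)
qed

lemma dirichlet_series_coeffs_eq_0:
  fixes a :: "nat \<Rightarrow> complex"
  assumes "\<And>\<sigma>. \<sigma> > \<sigma>0 \<Longrightarrow> (\<lambda>n. a n * of_real (real n powr (- \<sigma>))) sums 0"
  shows "n \<ge> 1 \<Longrightarrow> a n = 0"
proof (induction n rule: less_induct)
  case (less n)
  then show ?case
    using dirichlet_series_lowest_coeff_eq_0[OF assms] by blast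
qed

lemma multiplicative_functions_linearly_independent:
  fixes f :: "'b \<Rightarrow> 'a::times \<Rightarrow> 'c::field"
  assumes "finite B" and "S \<noteq> {}"
    and mult_closed: "\<And>x y. x \<in> S \<Longrightarrow> y \<in> S \<Longrightarrow> x * y \<in> S"
    and mult: "\<And>\<beta> x y. x \<in> S \<Longrightarrow> y \<in> S \<Longrightarrow> f \<beta> (x * y) = f \<beta> x * f \<beta> y"
    and nonzero: "\<And>\<beta> x. x \<in> S \<Longrightarrow> f \<beta> x \<noteq> 0"
    and distinct: "\<And>\<beta> \<gamma>. \<beta> \<noteq> \<gamma> \<Longrightarrow> \<exists>x\<in>S. f \<beta> x \<noteq> f \<gamma> x"
    and "\<And>x. x \<in> S \<Longrightarrow> (\<Sum>\<beta>\<in>B. d \<beta> * f \<beta> x) = 0"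
  shows "\<forall>\<beta>\<in>B. d \<beta> = 0"
  using assms(1,7)
proof (induction B arbitrary: d rule: finite_induct)
  case empty
  then show ?case by simp
next
  case (insert \<gamma> B)
  \<comment> \<open>Subtracting \<open>f \<gamma> m\<close> times the relation at \<open>x\<close> from the relation at \<open>m * x\<close> eliminates \<open>\<gamma>\<close>.\<close>
  have shifted: "(\<Sum>\<beta>\<in>B. d \<beta> * (f \<beta> m - f \<gamma> m) * f \<beta> x) = 0"
    if "m \<in> S" "x \<in> S" for m x
  proof -
    have "(\<Sum>\<beta>\<in>B. d \<beta> * (f \<beta> m - f \<gamma> m) * f \<beta> x)
        = (\<Sum>\<beta>\<in>insert \<gamma> B. d \<beta> * f \<beta> (m * x)) - f \<gamma> m * (\<Sum>\<beta>\<in>insert \<gamma> B. d \<beta> * f \<beta> x)"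
      using insert.hyps that mult
      by (simp add: sum_distrib_left sum_subtractf[symmetric] algebra_simps)
    also have "\<dots> = 0"
      using insert.prems that mult_closed by simp
    finally show ?thesis .
  qed
  have vanish_B: "d \<beta> = 0" if \<beta>: "\<beta> \<in> B" for \<beta>
  proof -
    obtain m where "m \<in> S" "f \<beta> m \<noteq> f \<gamma> m"
      using distinct[of \<beta> \<gamma>] insert.hyps(2) \<beta> by blast
    moreover have "\<forall>\<beta>\<in>B. d \<beta> * (f \<beta> m - f \<gamma> m) = 0"
      using insert.IH[of "\<lambda>\<beta>. d \<beta> * (f \<beta> m - f \<gamma> m)"] shifted[OF \<open>m \<in> S\<close>]
      by blast
    ultimately show ?thesis
      using \<beta> by auto
  qed
  obtain x where "x \<in> S"
    using \<open>S \<noteq> {}\<close> by blast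
  with vanish_B have "d \<gamma> * f \<gamma> x = 0"
    using insert.prems insert.hyps by simp
  then show ?case
    using vanish_B nonzero \<open>x \<in> S\<close> by simp
qed

lemma nat_powr_imaginary_eq_imp_int_multiple:
  assumes "n \<ge> 1" and "of_nat n powr (\<i> * of_real \<beta>) = of_nat n powr (\<i> * of_real \<gamma>)"
  obtains m :: int where "(\<beta> - \<gamma>) * ln (real n) = 2 * pi * m"
proof -
  have "exp (\<i> * of_real \<beta> * of_real (ln (real n))) = exp (\<i> * of_real \<gamma> * of_real (ln (real n)))"
    using assms by (simp add: powr_def Ln_of_nat)
  then obtain m :: int where
    "\<i> * of_real \<beta> * of_real (ln (real n)) = \<i> * of_real \<gamma> * of_real (ln (real n)) + of_real (of_int (2 * m) * pi) * \<i>"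
    unfolding exp_eq by blast
  from arg_cong[OF this, of Im] show ?thesis
    by (intro that[of m]) (simp add: algebra_simps)
qed

lemma coprime_imaginary_powers_eq_imp_eq:
  fixes p q :: nat
  assumes "coprime p q" "p \<ge> 2" "q \<ge> 2"
    and "of_nat p powr (\<i> * of_real \<beta>) = of_nat p powr (\<i> * of_real \<gamma>)"
    and "of_nat q powr (\<i> * of_real \<beta>) = of_nat q powr (\<i> * of_real \<gamma>)"
  shows "\<beta> = \<gamma>"
proof (rule ccontr)
  assume "\<beta> \<noteq> \<gamma>"
  obtain m :: int where m: "(\<beta> - \<gamma>) * ln (real p) = 2 * pi * m"
    using nat_powr_imaginary_eq_imp_int_multiple[OF _ assms(4)] assms(2) by force
  obtain m' :: int where m': "(\<beta> - \<gamma>) * ln (real q) = 2 * pi * m'"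
    using nat_powr_imaginary_eq_imp_int_multiple[OF _ assms(5)] assms(3) by force
  have ln_pos: "ln (real p) > 0" "ln (real q) > 0"
    using assms by auto
  have "(\<beta> - \<gamma>) * (m' * ln (real p)) = (\<beta> - \<gamma>) * (m * ln (real q))"
    using m m' by (simp add: algebra_simps)
  then have "m' * ln (real p) = m * ln (real q)"
    using \<open>\<beta> \<noteq> \<gamma>\<close> by simp
  then have "nat \<bar>m'\<bar> * ln (real p) = nat \<bar>m\<bar> * ln (real q)"
    using ln_pos by (metis abs_mult abs_of_pos of_int_abs of_nat_nat abs_ge_zero)
  then have "ln (real (p ^ nat \<bar>m'\<bar>)) = ln (real (q ^ nat \<bar>m\<bar>))"
    using assms by (simp add: ln_realpow)
  then have "p ^ nat \<bar>m'\<bar> = q ^ nat \<bar>m\<bar>"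
    using assms by (subst (asm) ln_inj_iff) (auto simp flip: of_nat_power)
  moreover have "coprime (p ^ nat \<bar>m'\<bar>) (q ^ nat \<bar>m\<bar>)"
    using assms by simp
  ultimately have "p ^ nat \<bar>m'\<bar> = 1"
    by simp
  moreover have "m' \<noteq> 0"
    using m' ln_pos \<open>\<beta> \<noteq> \<gamma>\<close> by auto
  ultimately show False
    using assms by simp
qed

definition tw_coeff :: "(nat \<Rightarrow> real) \<Rightarrow> real \<Rightarrow> nat \<Rightarrow> complex" where
  "tw_coeff b \<beta> n = (if n \<in> supp_seq b then of_nat n powr (\<i> * of_real \<beta>) * of_real (b n) else 0)"

lemma tw_term_eq: "tw_term b \<beta> s n = tw_coeff b \<beta> n * of_nat n powr (- s)"
  by (simp add: tw_term_def tw_coeff_def)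

lemma holomorphic_tw_series:
  assumes "\<And>s. s \<in> half_plane \<rho> \<Longrightarrow> summable (tw_term b \<beta> s)"
  shows "tw_series b \<beta> holomorphic_on half_plane \<rho>"
proof -
  have "half_plane \<rho> = (\<Union>\<sigma>\<in>{\<rho><..}. {s. Re s > Re (of_real \<sigma>)})"
    by (auto simp: half_plane_def dest: dense)
  moreover have "tw_series b \<beta> holomorphic_on {s. Re s > Re (of_real \<sigma>)}" if "\<sigma> > \<rho>" for \<sigma>
    unfolding tw_series_def tw_term_eq
  proof (rule holomorphic_dirichlet_series)
    show "summable (\<lambda>n. tw_coeff b \<beta> n * of_nat n powr (- of_real \<sigma>))"
      using assms[of "of_real \<sigma>"] that by (simp add: half_plane_def tw_term_eq[abs_def])
  qed
  ultimately show ?thesis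
    by (auto intro!: holomorphic_on_UN_open open_halfspace_Re_gt)
qed

lemma tw_series_lincomb_eq_0_imp_powr_sum_eq_0:
  assumes summable: "\<And>\<beta> s. s \<in> half_plane \<rho> \<Longrightarrow> summable (tw_term b \<beta> s)"
    and "finite B" and vanish: "\<forall>s\<in>half_plane \<rho>. (\<Sum>\<beta>\<in>B. c \<beta> * tw_series b \<beta> s) = 0"
    and "n \<in> supp_seq b"
  shows "(\<Sum>\<beta>\<in>B. c \<beta> * of_nat n powr (\<i> * of_real \<beta>)) = 0"
proof -
  define e where "e n = (\<Sum>\<beta>\<in>B. c \<beta> * tw_coeff b \<beta> n)" for n
  have "(\<lambda>n. e n * of_real (real n powr (- \<sigma>))) sums 0" if "\<sigma> > \<rho>" for \<sigma>
  proof -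
    have "of_real \<sigma> \<in> half_plane \<rho>"
      using that by (simp add: half_plane_def)
    then have "(\<lambda>n. \<Sum>\<beta>\<in>B. c \<beta> * tw_term b \<beta> (of_real \<sigma>) n)
        sums (\<Sum>\<beta>\<in>B. c \<beta> * tw_series b \<beta> (of_real \<sigma>))"
      unfolding tw_series_def by (intro sums_sum sums_mult summable_sums summable)
    then have "(\<lambda>n. \<Sum>\<beta>\<in>B. c \<beta> * tw_term b \<beta> (of_real \<sigma>) n) sums 0"
      using vanish \<open>of_real \<sigma> \<in> half_plane \<rho>\<close> by simp
    moreover have "of_nat n powr (- of_real \<sigma>) = (of_real (real n powr (- \<sigma>)) :: complex)" for n
      by (metis of_real_of_nat_eq of_real_minus powr_of_real of_nat_0_le_iff)
    ultimately show ?thesis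
      by (simp add: e_def tw_term_eq sum_distrib_right mult.assoc)
  qed
  then have "e n = 0"
    using dirichlet_series_coeffs_eq_0 \<open>n \<in> supp_seq b\<close> by (auto simp: supp_seq_def)
  moreover have "e n = (\<Sum>\<beta>\<in>B. c \<beta> * of_nat n powr (\<i> * of_real \<beta>)) * of_real (b n)"
    using \<open>n \<in> supp_seq b\<close> by (simp add: e_def tw_coeff_def sum_distrib_right mult.assoc)
  moreover have "b n \<noteq> 0"
    using \<open>n \<in> supp_seq b\<close> by (simp add: supp_seq_def)
  ultimately show ?thesis
    by simp
qed

lemma admissible_imaginary_powers_linearly_independent:
  assumes "admissible b" and "finite B"
    and vanish: "\<And>n. n \<in> supp_seq b \<Longrightarrow> (\<Sum>\<beta>\<in>B. c \<beta> * of_nat n powr (\<i> * of_real \<beta>)) = 0"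
  shows "\<forall>\<beta>\<in>B. c \<beta> = 0"
proof (rule multiplicative_functions_linearly_independent[OF \<open>finite B\<close>])
  obtain p q where p: "p \<in> supp_seq b" "p \<noteq> 1" and q: "q \<in> supp_seq b" "q \<noteq> 1" and "coprime p q"
    using \<open>admissible b\<close> by (auto simp: admissible_def)
  then have "p \<ge> 2" "q \<ge> 2"
    by (auto simp: supp_seq_def)
  show "supp_seq b \<noteq> {}"
    using p by blast
  show "m * n \<in> supp_seq b" if "m \<in> supp_seq b" "n \<in> supp_seq b" for m n
    using \<open>admissible b\<close> that by (auto simp: admissible_def)
  show "of_nat (m * n) powr (\<i> * of_real \<beta>) = of_nat m powr (\<i> * of_real \<beta>) * of_nat n powr (\<i> * of_real \<beta>)" for m n \<beta>
    unfolding of_nat_mult by (rule powr_times_real) auto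
  show "of_nat n powr (\<i> * of_real \<beta>) \<noteq> 0" if "n \<in> supp_seq b" for n \<beta>
    using that by (simp add: supp_seq_def)
  show "\<exists>n\<in>supp_seq b. of_nat n powr (\<i> * of_real \<beta>) \<noteq> of_nat n powr (\<i> * of_real \<gamma>)"
    if "\<beta> \<noteq> \<gamma>" for \<beta> \<gamma>
    using coprime_imaginary_powers_eq_imp_eq[OF \<open>coprime p q\<close> \<open>p \<ge> 2\<close> \<open>q \<ge> 2\<close>] p q that by blast
qed (use vanish in auto)

theorem proposition5p5:
  fixes \<rho> :: real and b :: "nat \<Rightarrow> real"
  assumes "admissible b"
    and "\<And>\<beta> s. s \<in> half_plane \<rho> \<Longrightarrow> summable (tw_term b \<beta> s)"
  shows "(\<forall>\<beta>. tw_series b \<beta> holomorphic_on half_plane \<rho>) \<and>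
         (\<forall>B c. finite B \<longrightarrow>
            (\<forall>s\<in>half_plane \<rho>. (\<Sum>\<beta>\<in>B. c \<beta> * tw_series b \<beta> s) = 0) \<longrightarrow>
            (\<forall>\<beta>\<in>B. c \<beta> = (0::complex)))"
proof (intro conjI allI impI)
  show "tw_series b \<beta> holomorphic_on half_plane \<rho>" for \<beta>
    using assms(2) by (rule holomorphic_tw_series)
  show "\<forall>\<beta>\<in>B. c \<beta> = 0"
    if "finite B" and "\<forall>s\<in>half_plane \<rho>. (\<Sum>\<beta>\<in>B. c \<beta> * tw_series b \<beta> s) = 0" for B c
    using admissible_imaginary_powers_linearly_independent[OF assms(1) \<open>finite B\<close>]
      tw_series_lincomb_eq_0_imp_powr_sum_eq_0[OF assms(2) that] by blast
qed

end
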